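(* For a finite set $\mathcal{D}$ and $n\ge1$, let $p(n,\mathcal{D})$ be the number of degenerate $n$-ary relations on $\mathcal{D}$ divided by the number $2^{|\mathcal{D}|^n}$ of all $n$-ary relations on $\mathcal{D}$. Then $p(n,\mathcal{D})\to0$ when $|\mathcal{D}|\ge2$ is fixed and $n\to\infty$, and also when $n\ge2$ is fixed and $|\mathcal{D}|\to\infty$.
   Context: An $n$-ary relation on $\mathcal{D}$ is a subset $R\subseteq\mathcal{D}^{\{1,\dots,n\}}$. $R$ is degenerate if there is a partition $\{1,\dots,n\}=\Lambda_1\cup\dots\cup\Lambda_m$ with $m>1$ and all $\Lambda_i\ne\emptyset$ and relations $R^{\Lambda_i}\subseteq\mathcal{D}^{\Lambda_i}$ such that $R=\{a: a|_{\Lambda_i}\in R^{\Lambda_i}\ \forall i\}$. *)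

theory Defs
  imports Complex_Main "HOL-Library.FuncSet" "HOL-Library.Disjoint_Sets"
begin

definition relation_on :: "nat \<Rightarrow> 'a set \<Rightarrow> (nat \<Rightarrow> 'a) set \<Rightarrow> bool" where
  "relation_on n D R \<longleftrightarrow> R \<subseteq> ({1..n} \<rightarrow>\<^sub>E D)"

definition degenerate :: "nat \<Rightarrow> 'a set \<Rightarrow> (nat \<Rightarrow> 'a) set \<Rightarrow> bool" where
  "degenerate n D R \<longleftrightarrow>
     (\<exists>P S. partition_on {1..n} P \<and> card P > 1 \<and>
        (\<forall>B\<in>P. S B \<subseteq> (B \<rightarrow>\<^sub>E D)) \<and>
        R = {a \<in> {1..n} \<rightarrow>\<^sub>E D. \<forall>B\<in>P. restrict a B \<in> S B})"

definition p_degen :: "nat \<Rightarrow> 'a set \<Rightarrow> real" where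
  "p_degen n D = real (card {R. relation_on n D R \<and> degenerate n D R}) / 2 ^ (card D ^ n)"

end

theory Submission
  imports Defs
begin

(* Merging all blocks of the partition but one shows that a degenerate relation is determined by
   a proper nonempty set L of coordinates together with a relation on D^L and one on
   D^({1..n} - L). With d = |D| and k = |L| there are therefore at most
   2^n * 2^(d^k + d^(n-k)) <= 2^n * 2^(d + d^(n-1)) degenerate relations, and the exponent
   n + d + d^(n-1) falls behind d^n by an amount that tends to infinity in either limit. *)

lemma power_add_power_diff_le:
  fixes d :: nat
  assumes "0 < k" "k < n"
  shows "d ^ k + d ^ (n - k) \<le> d + d ^ (n - 1)"
proof (cases "d = 0")
  case False
  obtain a b where ab: "k = Suc a" "n - k = Suc b" "n - 1 = Suc (a + b)"
    using assms by (intro that[of "k - 1" "n - k - 1"]) auto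
  obtain x y where "d ^ a = Suc x" "d ^ b = Suc y"
    using False by (metis not0_implies_Suc power_not_zero)
  then have "d ^ a + d ^ b \<le> 1 + d ^ a * d ^ b"
    by simp
  then have "d * (d ^ a + d ^ b) \<le> d * (1 + d ^ a * d ^ b)"
    by (rule mult_le_mono2)
  then show ?thesis
    using ab by (simp add: algebra_simps power_add)
qed (use assms in \<open>simp add: zero_power\<close>)

lemma double_add_power_le_Suc_power:
  fixes d k :: nat
  assumes "2 \<le> d"
  shows "2 * k + d ^ k \<le> d ^ Suc k"
proof -
  have "2 * k \<le> 2 ^ k"
  proof (cases k)
    case (Suc j)
    then show ?thesis
      using less_exp[of j] by (simp del: less_exp)
  qed simp
  also have "\<dots> \<le> d ^ k"
    using assms by (rule power_mono) simp
  finally have "2 * k + d ^ k \<le> 2 * d ^ k"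
    by simp
  also have "\<dots> \<le> d ^ Suc k"
    using assms by simp
  finally show ?thesis .
qed

definition product_relation ::
  "'i set \<Rightarrow> 'a set \<Rightarrow> 'i set \<Rightarrow> ('i \<Rightarrow> 'a) set \<Rightarrow> ('i \<Rightarrow> 'a) set \<Rightarrow> ('i \<Rightarrow> 'a) set" where
  "product_relation I D L S T = {a \<in> I \<rightarrow>\<^sub>E D. restrict a L \<in> S \<and> restrict a (I - L) \<in> T}"

lemma partition_relation_eq_product_relation:
  assumes P: "partition_on I P" and B: "B \<in> P"
  shows "{a \<in> I \<rightarrow>\<^sub>E D. \<forall>C\<in>P. restrict a C \<in> S C} =
    product_relation I D B (S B) {b \<in> (I - B) \<rightarrow>\<^sub>E D. \<forall>C\<in>P - {B}. restrict b C \<in> S C}"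
proof -
  have "(I - B) \<inter> C = C" if "C \<in> P - {B}" for C
    using that B P partition_onD1 partition_onD2 disjointD by blast
  then show ?thesis
    unfolding product_relation_def using B by (auto simp: PiE_iff)
qed

lemma partition_on_card_gt_1_proper_block:
  assumes P: "partition_on I P" and "card P > 1"
  obtains B where "B \<in> P" "B \<noteq> {}" "B \<subset> I"
proof -
  obtain B C where BC: "B \<in> P" "C \<in> P" "B \<noteq> C"
    using \<open>card P > 1\<close> card_le_Suc0_iff_eq[of P] card.infinite by force
  have "C \<noteq> {}" "C \<subseteq> I" "B \<inter> C = {}" "B \<noteq> {}" "B \<subseteq> I"
    using BC P partition_onD1 partition_onD2 partition_onD3 disjointD by blast+
  then show thesis using that BC(1) by blast
qed

lemma degenerate_imp_product_relation:
  assumes "degenerate n D R"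
  obtains L S T where "L \<noteq> {}" "L \<subset> {1..n}" "S \<subseteq> L \<rightarrow>\<^sub>E D" "T \<subseteq> ({1..n} - L) \<rightarrow>\<^sub>E D"
    "R = product_relation {1..n} D L S T"
proof -
  obtain P S where P: "partition_on {1..n} P" "card P > 1" "\<forall>B\<in>P. S B \<subseteq> B \<rightarrow>\<^sub>E D"
    and R: "R = {a \<in> {1..n} \<rightarrow>\<^sub>E D. \<forall>B\<in>P. restrict a B \<in> S B}"
    using assms unfolding degenerate_def by blast
  obtain B where B: "B \<in> P" "B \<noteq> {}" "B \<subset> {1..n}"
    using partition_on_card_gt_1_proper_block P(1,2) .
  define T where "T = {b \<in> ({1..n} - B) \<rightarrow>\<^sub>E D. \<forall>C\<in>P - {B}. restrict b C \<in> S C}"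
  have "T \<subseteq> ({1..n} - B) \<rightarrow>\<^sub>E D"
    unfolding T_def by blast
  moreover have "R = product_relation {1..n} D B (S B) T"
    unfolding R T_def by (rule partition_relation_eq_product_relation[OF P(1) B(1)])
  moreover have "S B \<subseteq> B \<rightarrow>\<^sub>E D"
    using P(3) B(1) by blast
  ultimately show thesis
    using that[OF B(2,3)] by blast
qed

lemma card_product_relations_le:
  assumes "finite I" "finite D" "L \<noteq> {}" "L \<subset> I"
  shows "card {product_relation I D L S T | S T. S \<subseteq> L \<rightarrow>\<^sub>E D \<and> T \<subseteq> (I - L) \<rightarrow>\<^sub>E D}
    \<le> 2 ^ (card D + card D ^ (card I - 1))"
proof -
  have fin: "finite L" "finite (I - L)"
    using assms finite_subset by auto
  have "0 < card L" "card L < card I"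
    using assms(3,4) fin card_gt_0_iff psubset_card_mono[OF assms(1,4)] by blast+
  then have exponent: "card D ^ card L + card D ^ (card I - card L) \<le> card D + card D ^ (card I - 1)"
    by (rule power_add_power_diff_le)
  have "{product_relation I D L S T | S T. S \<subseteq> L \<rightarrow>\<^sub>E D \<and> T \<subseteq> (I - L) \<rightarrow>\<^sub>E D} =
      (\<lambda>(S, T). product_relation I D L S T) ` (Pow (L \<rightarrow>\<^sub>E D) \<times> Pow ((I - L) \<rightarrow>\<^sub>E D))"
    by auto
  also have "card \<dots> \<le> card (Pow (L \<rightarrow>\<^sub>E D) \<times> Pow ((I - L) \<rightarrow>\<^sub>E D))"
    by (rule card_image_le) (simp add: assms fin finite_PiE)
  also have "\<dots> = 2 ^ (card D ^ card L + card D ^ (card I - card L))"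
    using assms fin by (simp add: card_cartesian_product card_Pow card_PiE finite_PiE
        card_Diff_subset power_add)
  also have "\<dots> \<le> 2 ^ (card D + card D ^ (card I - 1))"
    using exponent by (rule power_increasing) simp
  finally show ?thesis .
qed

lemma card_degenerate_le:
  assumes "finite D"
  shows "card {R. relation_on n D R \<and> degenerate n D R} \<le> 2 ^ n * 2 ^ (card D + card D ^ (n - 1))"
proof -
  define Ls where "Ls = {L. L \<noteq> {} \<and> L \<subset> {1..n}}"
  define G where "G L = {product_relation {1..n} D L S T | S T.
      S \<subseteq> L \<rightarrow>\<^sub>E D \<and> T \<subseteq> ({1..n} - L) \<rightarrow>\<^sub>E D}" for L
  have "{R. relation_on n D R \<and> degenerate n D R} \<subseteq> (\<Union>L\<in>Ls. G L)"
    unfolding Ls_def G_def by (blast elim: degenerate_imp_product_relation)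
  moreover have "finite (\<Union>L\<in>Ls. G L)"
  proof (rule finite_subset)
    show "(\<Union>L\<in>Ls. G L) \<subseteq> Pow ({1..n} \<rightarrow>\<^sub>E D)"
      unfolding G_def product_relation_def by blast
  qed (simp add: assms finite_PiE)
  ultimately have "card {R. relation_on n D R \<and> degenerate n D R} \<le> card (\<Union>L\<in>Ls. G L)"
    by (rule card_mono[rotated])
  also have "\<dots> \<le> (\<Sum>L\<in>Ls. card (G L))"
    by (rule card_UN_le, rule finite_subset[of _ "Pow {1..n}"]) (auto simp: Ls_def)
  also have "\<dots> \<le> (\<Sum>L\<in>Ls. 2 ^ (card D + card D ^ (n - 1)))"
    using assms card_product_relations_le[of "{1..n}" D] unfolding Ls_def G_def
    by (intro sum_mono) simp
  also have "\<dots> \<le> 2 ^ n * 2 ^ (card D + card D ^ (n - 1))"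
  proof -
    have "card Ls \<le> card (Pow {1..n})"
      by (rule card_mono) (auto simp: Ls_def)
    then show ?thesis
      by (simp add: card_Pow)
  qed
  finally show ?thesis .
qed

lemma p_degen_le_half_power:
  assumes "finite D" "n + card D + card D ^ (n - 1) + m \<le> card D ^ n"
  shows "p_degen n D \<le> (1 / 2) ^ m"
proof -
  let ?c = "card {R. relation_on n D R \<and> degenerate n D R}"
  have "?c * 2 ^ m \<le> 2 ^ n * 2 ^ (card D + card D ^ (n - 1)) * 2 ^ m"
    using card_degenerate_le[OF assms(1)] by simp
  also have "\<dots> = 2 ^ (n + card D + card D ^ (n - 1) + m)"
    by (simp add: power_add)
  also have "\<dots> \<le> 2 ^ (card D ^ n)"
    using assms(2) by (rule power_increasing) simp
  finally have "real (?c * 2 ^ m) \<le> real (2 ^ (card D ^ n))"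
    by (rule of_nat_mono)
  then have "real ?c \<le> 2 ^ (card D ^ n) / 2 ^ m"
    by (simp add: pos_le_divide_eq)
  then show ?thesis
    unfolding p_degen_def by (simp add: divide_le_eq power_one_over)
qed

lemma p_degen_tendsto_zero_arity:
  assumes "finite D" "2 \<le> card D"
  shows "(\<lambda>n. p_degen n D) \<longlonglongrightarrow> 0"
proof (rule LIMSEQ_offset[where k = "card D + 2"])
  have "p_degen (n + (card D + 2)) D \<le> (1 / 2) ^ n" for n
  proof (rule p_degen_le_half_power[OF assms(1)])
    show "n + (card D + 2) + card D + card D ^ (n + (card D + 2) - 1) + n \<le> card D ^ (n + (card D + 2))"
      using double_add_power_le_Suc_power[OF assms(2), of "n + card D + 1"] by simp
  qed
  then show "(\<lambda>n. p_degen (n + (card D + 2)) D) \<longlonglongrightarrow> 0"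
    by (intro tendsto_sandwich[OF _ _ tendsto_const LIMSEQ_power_zero[of "1 / 2 :: real"]])
      (simp_all add: p_degen_def)
qed

lemma p_degen_small_for_large_domain:
  assumes "2 \<le> n" "0 < \<epsilon>"
  shows "\<exists>N. \<forall>D :: 'a set. finite D \<and> N \<le> card D \<longrightarrow> p_degen n D < \<epsilon>"
proof -
  obtain m where m: "(1 / 2) ^ m < \<epsilon>"
    using real_arch_pow_inv[OF assms(2), of "1 / 2"] by auto
  have "p_degen n D < \<epsilon>" if D: "finite D" "n + m + 2 \<le> card D" for D :: "'a set"
  proof -
    obtain c where c: "card D = Suc c"
      using D(2) by (cases "card D") auto
    have "2 \<le> card D ^ (n - 1)"
      using assms(1) D(2) self_le_power[of "card D" "n - 1"] by linarith
    then have "c * 2 \<le> c * card D ^ (n - 1)"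
      by (rule mult_le_mono2)
    moreover have "card D ^ n = card D ^ (n - 1) + c * card D ^ (n - 1)"
      using assms(1) c by (metis Suc_diff_1 less_le_trans mult_Suc pos2 power_Suc)
    ultimately have "n + card D + card D ^ (n - 1) + m \<le> card D ^ n"
      using c D(2) by linarith
    then have "p_degen n D \<le> (1 / 2) ^ m"
      using p_degen_le_half_power[OF D(1)] by blast
    with m show ?thesis by linarith
  qed
  then show ?thesis by blast
qed

theorem theorem6:
  shows "(\<forall>D :: 'a set. finite D \<and> card D \<ge> 2 \<longrightarrow> (\<lambda>n. p_degen n D) \<longlonglongrightarrow> 0) \<and>
         (\<forall>n::nat. n \<ge> 2 \<longrightarrow>
            (\<forall>\<epsilon>>0. \<exists>N. \<forall>D :: 'a set. finite D \<and> card D \<ge> N \<longrightarrow> p_degen n D < \<epsilon>))"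
  using p_degen_tendsto_zero_arity p_degen_small_for_large_domain by blast

end
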